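(* Let $n>1$, $m\ge1$, let $P$ be a pivot path of $v\in Z_{n,m}$ and let $I=[p_1+1,p_2]$ be a $P$-interval. If $I$ contains $0$ or $m+1$, assume also that no step of $P$ is a left shift at $m$ applied to a vertex whose entry $m+1$ equals $0$, and no step of $P$ is a right shift at $0$ applied to a vertex whose entry $0$ equals $0$. Then: (1) if $P$ shifts left in $I$, then $d_I(P)=\sum_{i\in I} i\,v_i$; (2) if $P$ shifts right in $I$, then $d_I(P)=\sum_{i\in I}(m+1-i)v_i$.
   Context: Elements of $\mathbb{Z}_n$ are identified with representatives in $\{0,\dots,n-1\}$ (so $v_0,v_{m+1}$ are treated as such integers in sums). $Z_{n,m}$ has vertices $u=(u_0,\dots,u_{m+1})\in\mathbb{Z}_n\times\{-1,0,1\}^m\times\mathbb{Z}_n$ with $\sum u_i\equiv0\pmod n$. A step from $v$ to $u$ is a left shift at $i$ ($0\le i\le m$) if $u_j=v_j$ for $j\notin\{i,i+1\}$, $u_i=v_i+1$, $u_{i+1}=v_{i+1}-1$, and a right shift at $i$ if $u_i=v_i-1$, $u_{i+1}=v_{i+1}+1$ (arithmetic in coordinates $0,m+1$ in $\mathbb{Z}_n$); vertices are adjacent iff related by such a shift. For a path $P$ from $v$ to the all-zero vertex $0$: $0\le p\le m$ is an inner wall if no step is a shift at $p$; $-1$ is a wall if no step is a left shift at $0$; $m+1$ is a wall if no step is a right shift at $m$. A $p$-pivot path of $v$ is a shortest path from $v$ to $0$ among those having $p$ as a wall; a pivot path is a $p$-pivot path for some $p$. If $p_1<\dots<p_t$ are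 the inner walls of $P$, $p_0=-1$, $p_{t+1}=m+1$, the $P$-intervals are $[p_k+1,p_{k+1}]$, $0\le k\le t$. For a pivot path, all steps that are shifts at some $j$ with $[j,j+1]\subseteq I$ go in the same direction; $P$ shifts left (right) in $I$ if that direction is left (right). $d_I(P)$ is the number of steps of $P$ that are shifts at some $j$ with $[j,j+1]\subseteq I$. *)

theory Defs
  imports Main
begin

text \<open>Vertices of Z_{n,m} are represented as integer lists u = [u_0, ..., u_{m+1}]
  of length m+2; the end coordinates u_0, u_{m+1} are the representatives in {0..n-1}
  of elements of Z_n, the middle coordinates lie in {-1,0,1}.\<close>

definition vertex :: "nat \<Rightarrow> nat \<Rightarrow> int list \<Rightarrow> bool" where
  "vertex n m u \<longleftrightarrow> length u = m + 2
     \<and> u ! 0 \<in> {0..<int n} \<and> u ! (m+1) \<in> {0..<int n}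
     \<and> (\<forall>i\<in>{1..m}. u ! i \<in> {-1, 0, 1})
     \<and> sum_list u mod int n = 0"

definition zero_vertex :: "nat \<Rightarrow> int list" where
  "zero_vertex m = replicate (m + 2) 0"

definition coord_add :: "nat \<Rightarrow> nat \<Rightarrow> nat \<Rightarrow> int \<Rightarrow> int \<Rightarrow> int" where
  "coord_add n m j x d = (if j = 0 \<or> j = m + 1 then (x + d) mod int n else x + d)"

definition left_shift :: "nat \<Rightarrow> nat \<Rightarrow> nat \<Rightarrow> int list \<Rightarrow> int list \<Rightarrow> bool" where
  "left_shift n m i v u \<longleftrightarrow> i \<le> m \<and> length v = m + 2 \<and>
     u = v[i := coord_add n m i (v ! i) 1, Suc i := coord_add n m (Suc i) (v ! Suc i) (-1)]"

definition right_shift :: "nat \<Rightarrow> nat \<Rightarrow> nat \<Rightarrow> int list \<Rightarrow> int list \<Rightarrow> bool" where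
  "right_shift n m i v u \<longleftrightarrow> i \<le> m \<and> length v = m + 2 \<and>
     u = v[i := coord_add n m i (v ! i) (-1), Suc i := coord_add n m (Suc i) (v ! Suc i) 1]"

definition shift_at :: "nat \<Rightarrow> nat \<Rightarrow> nat \<Rightarrow> int list \<Rightarrow> int list \<Rightarrow> bool" where
  "shift_at n m i v u \<longleftrightarrow> left_shift n m i v u \<or> right_shift n m i v u"

definition adjacent :: "nat \<Rightarrow> nat \<Rightarrow> int list \<Rightarrow> int list \<Rightarrow> bool" where
  "adjacent n m v u \<longleftrightarrow> vertex n m v \<and> vertex n m u \<and> (\<exists>i. shift_at n m i v u)"

text \<open>A path is the list of its vertices; its steps are the pairs (P!k, P!(k+1)), k < length P - 1;
  its length is the number of steps.\<close>
definition is_path :: "nat \<Rightarrow> nat \<Rightarrow> int list \<Rightarrow> int list list \<Rightarrow> bool" where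
  "is_path n m v P \<longleftrightarrow> P \<noteq> [] \<and> hd P = v \<and> last P = zero_vertex m \<and>
     (\<forall>k < length P - 1. adjacent n m (P ! k) (P ! Suc k))"

definition inner_wall :: "nat \<Rightarrow> nat \<Rightarrow> int list list \<Rightarrow> int \<Rightarrow> bool" where
  "inner_wall n m P p \<longleftrightarrow> 0 \<le> p \<and> p \<le> int m \<and>
     (\<forall>k < length P - 1. \<not> shift_at n m (nat p) (P ! k) (P ! Suc k))"

definition is_wall :: "nat \<Rightarrow> nat \<Rightarrow> int list list \<Rightarrow> int \<Rightarrow> bool" where
  "is_wall n m P p \<longleftrightarrow>
     (if p = -1 then (\<forall>k < length P - 1. \<not> left_shift n m 0 (P ! k) (P ! Suc k))
      else if p = int m + 1 then (\<forall>k < length P - 1. \<not> right_shift n m m (P ! k) (P ! Suc k))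
      else inner_wall n m P p)"

definition p_pivot_path :: "nat \<Rightarrow> nat \<Rightarrow> int \<Rightarrow> int list \<Rightarrow> int list list \<Rightarrow> bool" where
  "p_pivot_path n m p v P \<longleftrightarrow> is_path n m v P \<and> is_wall n m P p \<and>
     (\<forall>Q. is_path n m v Q \<and> is_wall n m Q p \<longrightarrow> length P \<le> length Q)"

definition pivot_path :: "nat \<Rightarrow> nat \<Rightarrow> int list \<Rightarrow> int list list \<Rightarrow> bool" where
  "pivot_path n m v P \<longleftrightarrow> (\<exists>p \<in> {-1 .. int m + 1}. p_pivot_path n m p v P)"

text \<open>[a+1, b] is a P-interval: a, b are consecutive elements of
  {-1} \<union> inner walls \<union> {m+1}.\<close>
definition P_interval :: "nat \<Rightarrow> nat \<Rightarrow> int list list \<Rightarrow> int \<Rightarrow> int \<Rightarrow> bool" where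
  "P_interval n m P a b \<longleftrightarrow>
     (let W = {-1, int m + 1} \<union> {p. inner_wall n m P p} in
       a \<in> W \<and> b \<in> W \<and> a < b \<and> (\<forall>p. a < p \<and> p < b \<longrightarrow> p \<notin> W))"

definition steps_in :: "nat \<Rightarrow> nat \<Rightarrow> int list list \<Rightarrow> int \<Rightarrow> int \<Rightarrow> nat set" where
  "steps_in n m P a b = {k. k < length P - 1 \<and>
     (\<exists>j. a + 1 \<le> int j \<and> int j + 1 \<le> b \<and> shift_at n m j (P ! k) (P ! Suc k))}"

definition d_I :: "nat \<Rightarrow> nat \<Rightarrow> int list list \<Rightarrow> int \<Rightarrow> int \<Rightarrow> nat" where
  "d_I n m P a b = card (steps_in n m P a b)"

definition shifts_left_in :: "nat \<Rightarrow> nat \<Rightarrow> int list list \<Rightarrow> int \<Rightarrow> int \<Rightarrow> bool" where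
  "shifts_left_in n m P a b \<longleftrightarrow> steps_in n m P a b \<noteq> {} \<and>
     (\<forall>k \<in> steps_in n m P a b. \<forall>j. a + 1 \<le> int j \<and> int j + 1 \<le> b \<and>
        shift_at n m j (P ! k) (P ! Suc k) \<longrightarrow> left_shift n m j (P ! k) (P ! Suc k))"

definition shifts_right_in :: "nat \<Rightarrow> nat \<Rightarrow> int list list \<Rightarrow> int \<Rightarrow> int \<Rightarrow> bool" where
  "shifts_right_in n m P a b \<longleftrightarrow> steps_in n m P a b \<noteq> {} \<and>
     (\<forall>k \<in> steps_in n m P a b. \<forall>j. a + 1 \<le> int j \<and> int j + 1 \<le> b \<and>
        shift_at n m j (P ! k) (P ! Suc k) \<longrightarrow> right_shift n m j (P ! k) (P ! Suc k))"

end

theory Submission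
  imports Defs
begin

text \<open>For a P-interval I, put \<Phi>(u) = \<Sum> i u_i over i \<in> I when P shifts left in I and
  \<Phi>(u) = \<Sum> (m+1-i) u_i over i \<in> I when it shifts right. \<Phi> vanishes at the zero vertex, a step of P
  outside I leaves \<Phi> unchanged (the walls bounding I are never crossed), and a step inside I
  lowers \<Phi> by exactly 1: the weights of adjacent positions differ by 1, the weight of the end
  coordinate leaving I is 0, and the hypothesis on the end coordinates excludes a wrap-around
  modulo n. Telescoping along P gives d_I(P) = \<Phi>(v).\<close>

definition weighted_sum :: "(int \<Rightarrow> int) \<Rightarrow> int \<Rightarrow> int \<Rightarrow> int list \<Rightarrow> int" where
  "weighted_sum w a b u = (\<Sum>i = a + 1..b. w i * u ! nat i)"

lemma telescope_indicator_card:
  fixes f :: "'a \<Rightarrow> int"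
  assumes "P \<noteq> []" "S \<subseteq> {..<length P - 1}"
    and "\<And>k. k < length P - 1 \<Longrightarrow> f (P ! k) - f (P ! Suc k) = (if k \<in> S then 1 else 0)"
  shows "f (hd P) - f (last P) = int (card S)"
proof -
  have "f (hd P) - f (last P) = (\<Sum>k<length P - 1. f (P ! k) - f (P ! Suc k))"
    using assms(1) sum_lessThan_telescope'[of "\<lambda>k. f (P ! k)"] by (simp add: hd_conv_nth last_conv_nth)
  also have "\<dots> = (\<Sum>k<length P - 1. if k \<in> S then 1 else 0)"
    using assms(3) by simp
  also have "\<dots> = int (card S)"
    using assms(2) by (simp add: sum.If_cases Int_absorb1)
  finally show ?thesis .
qed

lemma weighted_sum_update2:
  assumes "Suc j < length u" "a \<ge> -1"
  shows "weighted_sum w a b (u[j := x, Suc j := y]) = weighted_sum w a b u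
     + (if a + 1 \<le> int j \<and> int j \<le> b then w (int j) * (x - u ! j) else 0)
     + (if a + 1 \<le> int j + 1 \<and> int j + 1 \<le> b then w (int j + 1) * (y - u ! Suc j) else 0)"
proof -
  have "w i * u[j := x, Suc j := y] ! nat i = w i * u ! nat i
      + (if i = int j then w (int j) * (x - u ! j) else 0)
      + (if i = int j + 1 then w (int j + 1) * (y - u ! Suc j) else 0)" if "i \<ge> 0" for i
    using that assms(1) by (auto simp: nth_list_update) (simp_all add: ring_distribs)
  then have "weighted_sum w a b (u[j := x, Suc j := y]) = (\<Sum>i = a + 1..b. w i * u ! nat i
      + (if i = int j then w (int j) * (x - u ! j) else 0)
      + (if i = int j + 1 then w (int j + 1) * (y - u ! Suc j) else 0))"
    using assms(2) unfolding weighted_sum_def by (intro sum.cong) auto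
  then show ?thesis
    unfolding sum.distrib by (simp add: weighted_sum_def sum.delta)
qed

lemma coord_add_inner: "j \<noteq> 0 \<Longrightarrow> j \<noteq> m + 1 \<Longrightarrow> coord_add n m j x d = x + d"
  by (simp add: coord_add_def)

lemma coord_add_end_no_wrap:
  assumes "x \<in> {0..<int n}" "x \<noteq> 0"
  shows "coord_add n m j x (-1) = x - 1"
  using assms by (simp add: coord_add_def)

lemma weighted_sum_left_shift:
  assumes "vertex n m u" "left_shift n m j u u'" "a + 1 \<le> int j" "int j + 1 \<le> b" "a \<ge> -1"
    and "j = m \<Longrightarrow> u ! (m + 1) \<noteq> 0"
  shows "weighted_sum (\<lambda>i. i) a b u' = weighted_sum (\<lambda>i. i) a b u - 1"
proof -
  from assms(2) have jm: "j \<le> m" and len: "length u = m + 2"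
    and u': "u' = u[j := coord_add n m j (u ! j) 1, Suc j := coord_add n m (Suc j) (u ! Suc j) (-1)]"
    by (auto simp: left_shift_def)
  have sum_u': "weighted_sum (\<lambda>i. i) a b u' = weighted_sum (\<lambda>i. i) a b u
      + int j * (coord_add n m j (u ! j) 1 - u ! j)
      + (int j + 1) * (coord_add n m (Suc j) (u ! Suc j) (-1) - u ! Suc j)"
    unfolding u' using jm len assms(3-5) by (subst weighted_sum_update2) auto
  have end_j: "coord_add n m (Suc j) (u ! Suc j) (-1) = u ! Suc j - 1"
  proof (cases "j = m")
    case True
    with assms(1,6) show ?thesis by (intro coord_add_end_no_wrap) (auto simp: vertex_def)
  qed (use jm in \<open>simp add: coord_add_inner\<close>)
  have start_j: "int j * (coord_add n m j (u ! j) 1 - u ! j) = int j"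
    using jm by (cases "j = 0") (simp_all add: coord_add_inner)
  show ?thesis unfolding sum_u' start_j end_j by simp
qed

lemma weighted_sum_right_shift:
  assumes "vertex n m u" "right_shift n m j u u'" "a + 1 \<le> int j" "int j + 1 \<le> b" "a \<ge> -1"
    and "j = 0 \<Longrightarrow> u ! 0 \<noteq> 0"
  shows "weighted_sum (\<lambda>i. int m + 1 - i) a b u' = weighted_sum (\<lambda>i. int m + 1 - i) a b u - 1"
proof -
  from assms(2) have jm: "j \<le> m" and len: "length u = m + 2"
    and u': "u' = u[j := coord_add n m j (u ! j) (-1), Suc j := coord_add n m (Suc j) (u ! Suc j) 1]"
    by (auto simp: right_shift_def)
  have sum_u': "weighted_sum (\<lambda>i. int m + 1 - i) a b u' = weighted_sum (\<lambda>i. int m + 1 - i) a b u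
      + (int m + 1 - int j) * (coord_add n m j (u ! j) (-1) - u ! j)
      + (int m - int j) * (coord_add n m (Suc j) (u ! Suc j) 1 - u ! Suc j)"
    unfolding u' using jm len assms(3-5) by (subst weighted_sum_update2) auto
  have start_j: "coord_add n m j (u ! j) (-1) = u ! j - 1"
  proof (cases "j = 0")
    case True
    with assms(1,6) show ?thesis by (intro coord_add_end_no_wrap) (auto simp: vertex_def)
  qed (use jm in \<open>simp add: coord_add_inner\<close>)
  have end_j: "(int m - int j) * (coord_add n m (Suc j) (u ! Suc j) 1 - u ! Suc j) = int m - int j"
    using jm by (cases "j = m") (simp_all add: coord_add_inner)
  show ?thesis unfolding sum_u' start_j end_j by simp
qed

lemma weighted_sum_shift_outside:
  assumes "shift_at n m i u u'" "a \<ge> -1"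
    and "\<not> (a + 1 \<le> int i \<and> int i \<le> b)" "\<not> (a + 1 \<le> int i + 1 \<and> int i + 1 \<le> b)"
  shows "weighted_sum w a b u' = weighted_sum w a b u"
proof -
  from assms(1) obtain x y where u': "u' = u[i := x, Suc i := y]" and "Suc i < length u"
    by (auto simp: shift_at_def left_shift_def right_shift_def)
  then show ?thesis unfolding u' using assms(2-4) by (subst weighted_sum_update2) auto
qed

lemma weighted_sum_zero_vertex:
  assumes "a \<ge> -1" "b \<le> int m + 1"
  shows "weighted_sum w a b (zero_vertex m) = 0"
proof -
  have "zero_vertex m ! nat i = 0" if "i \<in> {a + 1..b}" for i
    using that assms unfolding zero_vertex_def by (subst nth_replicate) auto
  then show ?thesis by (simp add: weighted_sum_def)
qed

lemma P_interval_bounds: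
  assumes "P_interval n m P a b"
  shows "-1 \<le> a" "b \<le> int m + 1"
  using assms unfolding P_interval_def Let_def inner_wall_def by auto

lemma P_interval_end_not_shifted:
  assumes "P_interval n m P a b" "k < length P - 1" "shift_at n m i (P ! k) (P ! Suc k)"
  shows "int i \<noteq> a" "int i \<noteq> b"
proof -
  have i: "i \<le> m" using assms(3) by (auto simp: shift_at_def left_shift_def right_shift_def)
  have walls: "p = -1 \<or> p = int m + 1 \<or> inner_wall n m P p" if "p = a \<or> p = b" for p
    using that assms(1) unfolding P_interval_def Let_def by auto
  have "\<not> inner_wall n m P (int i)" using assms(2,3) by (auto simp: inner_wall_def)
  then show "int i \<noteq> a" "int i \<noteq> b" using walls i by force+
qed

lemma path_vertex:
  assumes "is_path n m v P" "k < length P - 1"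
  shows "vertex n m (P ! k)"
  using assms by (auto simp: is_path_def adjacent_def)

lemma d_I_eq_weighted_sum:
  assumes "is_path n m v P" "P_interval n m P a b"
    and "\<And>k. k \<in> steps_in n m P a b \<Longrightarrow> weighted_sum w a b (P ! k) - weighted_sum w a b (P ! Suc k) = 1"
  shows "int (d_I n m P a b) = weighted_sum w a b v"
proof -
  note bounds = P_interval_bounds[OF assms(2)]
  have step: "weighted_sum w a b (P ! k) - weighted_sum w a b (P ! Suc k)
      = (if k \<in> steps_in n m P a b then 1 else 0)" if k: "k < length P - 1" for k
  proof (cases "k \<in> steps_in n m P a b")
    case False
    from assms(1) k obtain i where sh: "shift_at n m i (P ! k) (P ! Suc k)"
      by (auto simp: is_path_def adjacent_def)
    have "\<not> (a + 1 \<le> int i \<and> int i + 1 \<le> b)"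
      using False k sh by (auto simp: steps_in_def)
    with P_interval_end_not_shifted[OF assms(2) k sh] bounds
    have "weighted_sum w a b (P ! Suc k) = weighted_sum w a b (P ! k)"
      by (intro weighted_sum_shift_outside[OF sh]) auto
    with False show ?thesis by simp
  qed (use assms(3) in simp)
  have "weighted_sum w a b (hd P) - weighted_sum w a b (last P) = int (card (steps_in n m P a b))"
    using assms(1) step by (intro telescope_indicator_card) (auto simp: is_path_def steps_in_def)
  then show ?thesis
    using assms(1) weighted_sum_zero_vertex[OF bounds] by (simp add: is_path_def d_I_def)
qed

lemma d_I_eq_weighted_sum_left:
  assumes "is_path n m v P" "P_interval n m P a b" "shifts_left_in n m P a b"
    and "\<And>k. \<lbrakk>k < length P - 1; int m + 1 \<le> b; left_shift n m m (P ! k) (P ! Suc k)\<rbrakk>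
      \<Longrightarrow> (P ! k) ! (m + 1) \<noteq> 0"
  shows "int (d_I n m P a b) = weighted_sum (\<lambda>i. i) a b v"
proof (rule d_I_eq_weighted_sum[OF assms(1,2)])
  fix k assume k: "k \<in> steps_in n m P a b"
  then obtain j where j: "a + 1 \<le> int j" "int j + 1 \<le> b" "shift_at n m j (P ! k) (P ! Suc k)"
    and k_step: "k < length P - 1" by (auto simp: steps_in_def)
  with assms(3) k have left: "left_shift n m j (P ! k) (P ! Suc k)" by (auto simp: shifts_left_in_def)
  with j k_step assms(4) have "j = m \<Longrightarrow> (P ! k) ! (m + 1) \<noteq> 0" by auto
  with left show "weighted_sum (\<lambda>i. i) a b (P ! k) - weighted_sum (\<lambda>i. i) a b (P ! Suc k) = 1"
    using weighted_sum_left_shift[OF path_vertex[OF assms(1) k_step] _ j(1,2)]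
      P_interval_bounds[OF assms(2)] by simp
qed

lemma d_I_eq_weighted_sum_right:
  assumes "is_path n m v P" "P_interval n m P a b" "shifts_right_in n m P a b"
    and "\<And>k. \<lbrakk>k < length P - 1; a + 1 \<le> 0; right_shift n m 0 (P ! k) (P ! Suc k)\<rbrakk>
      \<Longrightarrow> (P ! k) ! 0 \<noteq> 0"
  shows "int (d_I n m P a b) = weighted_sum (\<lambda>i. int m + 1 - i) a b v"
proof (rule d_I_eq_weighted_sum[OF assms(1,2)])
  fix k assume k: "k \<in> steps_in n m P a b"
  then obtain j where j: "a + 1 \<le> int j" "int j + 1 \<le> b" "shift_at n m j (P ! k) (P ! Suc k)"
    and k_step: "k < length P - 1" by (auto simp: steps_in_def)
  with assms(3) k have right: "right_shift n m j (P ! k) (P ! Suc k)" by (auto simp: shifts_right_in_def)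
  with j k_step assms(4) have "j = 0 \<Longrightarrow> (P ! k) ! 0 \<noteq> 0" by auto
  with right show "weighted_sum (\<lambda>i. int m + 1 - i) a b (P ! k)
      - weighted_sum (\<lambda>i. int m + 1 - i) a b (P ! Suc k) = 1"
    using weighted_sum_right_shift[OF path_vertex[OF assms(1) k_step] _ j(1,2)]
      P_interval_bounds[OF assms(2)] by simp
qed

theorem lemma5p13:
  fixes n m :: nat and v :: "int list" and P :: "int list list" and a b :: int
  assumes "n > 1" and "m \<ge> 1"
    and "vertex n m v"
    and "pivot_path n m v P"
    and "P_interval n m P a b"
    and "(a + 1 \<le> 0 \<or> int m + 1 \<le> b) \<longrightarrow>
           (\<forall>k < length P - 1.
              \<not> (left_shift n m m (P ! k) (P ! Suc k) \<and> (P ! k) ! (m + 1) = 0) \<and>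
              \<not> (right_shift n m 0 (P ! k) (P ! Suc k) \<and> (P ! k) ! 0 = 0))"
  shows "(shifts_left_in n m P a b \<longrightarrow>
            int (d_I n m P a b) = (\<Sum>i = a + 1..b. i * v ! nat i))
       \<and> (shifts_right_in n m P a b \<longrightarrow>
            int (d_I n m P a b) = (\<Sum>i = a + 1..b. (int m + 1 - i) * v ! nat i))"
proof -
  have path: "is_path n m v P" using assms(4) by (auto simp: pivot_path_def p_pivot_path_def)
  show ?thesis
  proof (intro conjI impI)
    assume "shifts_left_in n m P a b"
    with path assms(5,6) have "int (d_I n m P a b) = weighted_sum (\<lambda>i. i) a b v"
      by (intro d_I_eq_weighted_sum_left) auto
    then show "int (d_I n m P a b) = (\<Sum>i = a + 1..b. i * v ! nat i)"
      by (simp add: weighted_sum_def)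
  next
    assume "shifts_right_in n m P a b"
    with path assms(5,6) have "int (d_I n m P a b) = weighted_sum (\<lambda>i. int m + 1 - i) a b v"
      by (intro d_I_eq_weighted_sum_right) auto
    then show "int (d_I n m P a b) = (\<Sum>i = a + 1..b. (int m + 1 - i) * v ! nat i)"
      by (simp add: weighted_sum_def)
  qed
qed

end
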